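(* The set $\mathcal{E}_2$ of all $2$-essential subsets of $\operatorname{codes}(\{0,1\})$ is finite.
   Context: A coronal code over $S$ of length $m$ is a formal string $x=c:p_0p_1\dots p_{m-1}$ with $c,p_i\in S$; $\operatorname{center}(x)=c$, $\operatorname{petals}(x)=\{p_0,\dots,p_{m-1}\}$; codes are identified up to rotation/reversal of the petal string, giving $\operatorname{codes}(S)$. For $a,b,c\in S$ (indeterminates), $c^a_b:=\arccos\!\Big(\frac{(c+a)^2+(c+b)^2-(a+b)^2}{2(c+a)(c+b)}\Big)$, and $\alpha(x):=\sum_{i=0}^{m-1} c^{p_i}_{p_{i+1\bmod m}}$. For $\rho\in(0,\infty)^S$, $\alpha(x)|_\rho$ is the value obtained by substituting $\rho(s)$ for each symbol $s$. For $S=\{0,\dots,n-1\}$, a nonempty $C\subseteq\operatorname{codes}(S)$ is fundamental if $\{\operatorname{center}(x):x\in C\}=\{0,\dots,n-2\}$ and for every nonempty $K\subseteq\{0,\dots,n-2\}$ there is $D\subseteq C$ with $\{\operatorname{center}(x):x\in D\}=K$ and $\big(\bigcup_{x\in D}\operatorname{petals}(x)\big)\setminus K\ne\emptyset$. $C$ is $n$-essential if it is fundamental and there exist nondecreasing maps $\rho,\sigma:S\to(0,\infty)$ with $\alpha(x)|_\rho\le2\pi\le\alpha(x)|_\sigma$ for all $x\in C$. *)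

theory Defs
  imports Complex_Main
begin

text \<open>A raw coronal code c:p_0...p_{m-1} is a pair (c, [p_0,...,p_{m-1}]).
  Codes are identified up to rotation/reversal of the petal string; a code is
  the equivalence class of a raw code.\<close>

type_synonym raw_code = "nat \<times> nat list"

definition raw_equiv :: "raw_code \<Rightarrow> raw_code \<Rightarrow> bool" where
  "raw_equiv x y \<longleftrightarrow> fst x = fst y \<and>
     (\<exists>k. snd y = rotate k (snd x) \<or> snd y = rotate k (rev (snd x)))"

definition code_class :: "raw_code \<Rightarrow> raw_code set" where
  "code_class x = {y. raw_equiv x y}"

definition codes :: "nat set \<Rightarrow> raw_code set set" where
  "codes S = {code_class (c, ps) | c ps. c \<in> S \<and> set ps \<subseteq> S}"

definition rep :: "raw_code set \<Rightarrow> raw_code" where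
  "rep X = (SOME x. x \<in> X)"

definition center :: "raw_code set \<Rightarrow> nat" where
  "center X = fst (rep X)"

definition petals :: "raw_code set \<Rightarrow> nat set" where
  "petals X = set (snd (rep X))"

definition corner :: "real \<Rightarrow> real \<Rightarrow> real \<Rightarrow> real" where
  "corner c a b = arccos (((c + a)^2 + (c + b)^2 - (a + b)^2) / (2 * (c + a) * (c + b)))"

definition alpha_raw :: "(nat \<Rightarrow> real) \<Rightarrow> raw_code \<Rightarrow> real" where
  "alpha_raw \<rho> x = (let c = fst x; ps = snd x; m = length ps in
     (\<Sum>i<m. corner (\<rho> c) (\<rho> (ps ! i)) (\<rho> (ps ! ((i + 1) mod m)))))"

definition alpha :: "(nat \<Rightarrow> real) \<Rightarrow> raw_code set \<Rightarrow> real" where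
  "alpha \<rho> X = alpha_raw \<rho> (rep X)"

definition fundamental :: "nat \<Rightarrow> raw_code set set \<Rightarrow> bool" where
  "fundamental n C \<longleftrightarrow> C \<subseteq> codes {0..<n} \<and> C \<noteq> {} \<and>
     center ` C = {0..<n-1} \<and>
     (\<forall>K. K \<noteq> {} \<and> K \<subseteq> {0..<n-1} \<longrightarrow>
        (\<exists>D \<subseteq> C. center ` D = K \<and> (\<Union>x\<in>D. petals x) - K \<noteq> {}))"

definition essential :: "nat \<Rightarrow> raw_code set set \<Rightarrow> bool" where
  "essential n C \<longleftrightarrow> fundamental n C \<and>
     (\<exists>\<rho> \<sigma> :: nat \<Rightarrow> real.
        mono_on {0..<n} \<rho> \<and> mono_on {0..<n} \<sigma> \<and>
        (\<forall>s\<in>{0..<n}. 0 < \<rho> s \<and> 0 < \<sigma> s) \<and>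
        (\<forall>x\<in>C. alpha \<rho> x \<le> 2 * pi \<and> 2 * pi \<le> alpha \<sigma> x))"

end

theory Submission
  imports Defs
begin

text \<open>Every corner at the smallest label is at least \<open>\<pi>/3\<close> (the equilateral angle), so a code
  centred at the smallest symbol whose angle sum is at most \<open>2\<pi>\<close> has at most six petals.
  For \<open>n = 2\<close> every centre is \<open>0\<close>, hence an essential family consists of codes from the finite
  set of classes of petal strings over \<open>{0, 1}\<close> of length at most six.\<close>

lemma corner_ge_pi_div_3:
  fixes c a b :: real
  assumes "0 < c" "c \<le> a" "c \<le> b"
  shows "pi / 3 \<le> corner c a b"
proof -
  define y where "y = ((c + a)^2 + (c + b)^2 - (a + b)^2) / (2 * (c + a) * (c + b))"
  have pos: "0 < (c + a) * (c + b)" using assms by simp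
  have y_eq: "y = 1 - 2 * a * b / ((c + a) * (c + b))"
    using pos unfolding y_def by (simp add: field_simps power2_eq_square)
  have "a * b < (c + a) * (c + b)"
    using assms by (simp add: algebra_simps) (smt (verit) mult_pos_pos)
  hence "a * b / ((c + a) * (c + b)) < 1" using pos by simp
  hence "-1 \<le> y" using y_eq by simp
  moreover have "(c + a) * (c + b) \<le> (2 * a) * (2 * b)"
    using assms by (intro mult_mono) auto
  hence "1 / 4 \<le> a * b / ((c + a) * (c + b))" using pos by (simp add: field_simps)
  hence "y \<le> 1 / 2" using y_eq by (simp add: mult_ac)
  ultimately have "arccos (1 / 2) \<le> arccos y"
    by (intro arccos_le_arccos) auto
  thus ?thesis unfolding corner_def y_def[symmetric] by simp
qed

lemma alpha_raw_ge_length: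
  assumes "0 < \<rho> c" and "\<And>p. p \<in> set ps \<Longrightarrow> \<rho> c \<le> \<rho> p"
  shows "real (length ps) * (pi / 3) \<le> alpha_raw \<rho> (c, ps)"
proof -
  define m where "m = length ps"
  have "pi / 3 \<le> corner (\<rho> c) (\<rho> (ps ! i)) (\<rho> (ps ! ((i + 1) mod m)))" if "i < m" for i
  proof -
    have "(i + 1) mod m < m" using that by simp
    with that show ?thesis
      using assms unfolding m_def by (intro corner_ge_pi_div_3) auto
  qed
  hence "(\<Sum>i<m. pi / 3) \<le> (\<Sum>i<m. corner (\<rho> c) (\<rho> (ps ! i)) (\<rho> (ps ! ((i + 1) mod m))))"
    by (intro sum_mono) auto
  thus ?thesis unfolding alpha_raw_def m_def Let_def by simp
qed

lemma raw_equiv_rep_code_class: "raw_equiv x (rep (code_class x))"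
proof -
  have "x \<in> code_class x" unfolding code_class_def raw_equiv_def by (auto intro: exI[of _ 0])
  hence "rep (code_class x) \<in> code_class x" unfolding rep_def by (rule someI)
  thus ?thesis unfolding code_class_def by simp
qed

lemma raw_equiv_invariants:
  assumes "raw_equiv x y"
  shows "fst y = fst x" "length (snd y) = length (snd x)" "set (snd y) = set (snd x)"
  using assms unfolding raw_equiv_def by auto

lemma essential_code_at_0_petals_le_6:
  assumes "essential n C" and "code_class (0, ps) \<in> C" and "set ps \<subseteq> {0..<n}"
  shows "length ps \<le> 6"
proof -
  let ?X = "code_class (0, ps)"
  obtain \<rho> where mono: "mono_on {0..<n} \<rho>" and pos: "\<forall>s\<in>{0..<n}. 0 < \<rho> s"
    and alpha_le: "alpha \<rho> ?X \<le> 2 * pi"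
    using assms(1,2) unfolding essential_def by blast
  have equiv: "raw_equiv (0, ps) (rep ?X)" by (rule raw_equiv_rep_code_class)
  define ps' where "ps' = snd (rep ?X)"
  have rep: "rep ?X = (0, ps')"
    using raw_equiv_invariants(1)[OF equiv] unfolding ps'_def by (simp add: prod_eq_iff)
  have "n > 0" using assms(1) unfolding essential_def fundamental_def by auto
  have "real (length ps') * (pi / 3) \<le> alpha_raw \<rho> (0, ps')"
  proof (rule alpha_raw_ge_length)
    show "0 < \<rho> 0" using pos \<open>n > 0\<close> by simp
    show "\<rho> 0 \<le> \<rho> p" if "p \<in> set ps'" for p
    proof (rule mono_onD[OF mono])
      show "p \<in> {0..<n}"
        using that assms(3) raw_equiv_invariants(3)[OF equiv] unfolding ps'_def by auto
    qed (use \<open>n > 0\<close> in auto)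
  qed
  moreover have "length ps' = length ps"
    using raw_equiv_invariants(2)[OF equiv] unfolding ps'_def by simp
  moreover have "alpha_raw \<rho> (0, ps') \<le> 2 * pi"
    using alpha_le rep unfolding alpha_def by simp
  ultimately have "real (length ps) * (pi / 3) \<le> 2 * pi" by (metis order.trans)
  hence "real (length ps) * pi \<le> 6 * pi" by simp
  thus ?thesis by simp
qed

lemma essential_2_code_short:
  assumes "essential 2 C" and "X \<in> C" and "X \<in> codes {0..<2}"
  shows "X \<in> code_class ` ({0} \<times> {ps. set ps \<subseteq> {0..<2} \<and> length ps \<le> 6})"
proof -
  obtain c ps where X: "X = code_class (c, ps)" and ps: "set ps \<subseteq> {0..<2}"
    using assms(3) unfolding codes_def by auto
  have "center ` C = {0..<1}"
    using assms(1) unfolding essential_def fundamental_def by simp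
  hence "center X \<in> {0..<1}" using assms(2) by blast
  moreover have "center X = c"
    using raw_equiv_invariants(1)[OF raw_equiv_rep_code_class] unfolding X center_def by simp
  ultimately have "c = 0" by simp
  with assms(1,2) X ps have "length ps \<le> 6"
    using essential_code_at_0_petals_le_6 by blast
  with X ps \<open>c = 0\<close> show ?thesis by blast
qed

theorem lemma6p5:
  shows "finite {C. C \<subseteq> codes {0..<2} \<and> essential 2 C}"
proof -
  define F where "F = code_class ` ({0} \<times> {ps. set ps \<subseteq> {0..<2::nat} \<and> length ps \<le> 6})"
  have "finite F" unfolding F_def
    by (intro finite_imageI finite_cartesian_product finite_lists_length_le) auto
  moreover have "{C. C \<subseteq> codes {0..<2} \<and> essential 2 C} \<subseteq> Pow F"
    using essential_2_code_short unfolding F_def by blast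
  ultimately show ?thesis by (meson finite_Pow_iff finite_subset)
qed

end
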